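(* In the setting of the construction below, let $D\in\mathfrak M$, $D\subseteq\mathbb P$, be pre-dense in $\mathbb P$, and let $U\in\mathbb U$. Then $U\subseteq\bigcup D'$ for some finite $D'\subseteq D$. Moreover, $D$ is pre-dense in $\mathbb U\cup\mathbb P$.
   Context: Notation. $2^{<\omega}$ is the set of finite binary strings, $\Lambda$ the empty string, $\mathrm{lh}(s)$ the length of $s$, $2^n$ the set of strings of length $n$, $s\subseteq t$ means $t$ extends $s$, $s^\frown t$ concatenation. For strings $s,t$ with $\mathrm{lh}(s)\le\mathrm{lh}(t)$, $s\cdot t$ is the string of length $\mathrm{lh}(t)$ with $(s\cdot t)(k)=t(k)+s(k)\bmod 2$ for $k<\mathrm{lh}(s)$ and $(s\cdot t)(k)=t(k)$ otherwise; if $\mathrm{lh}(s)>\mathrm{lh}(t)$ then $s\cdot t=(s\restriction\mathrm{lh}(t))\cdot t$. For $T\subseteq 2^{<\omega}$, $s\cdot T=\{s\cdot t:t\in T\}$. For a tree $T$ and $s\in T$, $T\upharpoonright s=\{t\in T:s\subseteq t\lor t\subseteq s\}$. A perfect tree is a nonempty tree $T\subseteq 2^{<\omega}$ with no endpoints and no isolated branches; its stem $\mathrm{stem}(T)$ is the largest $s\in T$ with $T=T\upharpoonright s$. A perfect tree $T$ is large, written $T\in\mathbf{LT}$, if there are nonempty strings $q^i_n$ ($n<\omega$, $i=0,1$) with $\mathrm{lh}(q^0_n)=\mathrm{lh}(q^1_n)\ge1$ and $q^i_n(0)=i$, such that $T$ consists exactly of all initial segments of strings $r^\frown q^{i(0)}_0{}^\frown\cdots{}^\frown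 q^{i(n)}_n$, where $r=\mathrm{stem}(T)$, $n<\omega$, $i(0),\dots,i(n)\in\{0,1\}$. Its splitting levels are $\mathrm{spl}_0(T)=\mathrm{lh}(r)$, $\mathrm{spl}_{n+1}(T)=\mathrm{spl}_n(T)+\mathrm{lh}(q^0_n)$. For $T\in\mathbf{LT}$ and $i\in\{0,1\}$, $T(\to i)=T\upharpoonright(\mathrm{stem}(T)^\frown i)$; for $s\in 2^n$ with $n\ge1$, $T(\to s)=(\cdots((T(\to s(0)))(\to s(1)))\cdots)(\to s(n-1))$, and $T(\to\Lambda)=T$. For $S,T\in\mathbf{LT}$, $S\subseteq_n T$ means $S\subseteq T$ and $\mathrm{spl}_k(S)=\mathrm{spl}_k(T)$ for all $k<n$. A large-tree forcing notion (LTF) is a set $\mathbb P\subseteq\mathbf{LT}$ such that $T\upharpoonright u\in\mathbb P$ whenever $u\in T\in\mathbb P$, and $s\cdot T\in\mathbb P$ whenever $T\in\mathbb P$ and $s\in 2^{<\omega}$; ordered by inclusion (smaller is stronger). $\mathbf{LC}_n(\mathbb P)$ is the set of $T\in\mathbf{LT}$ with $T(\to s)\in\mathbb P$ for all $s\in 2^n$. Multitrees. A multitree is a sequence $\varphi=\langle\langle\tau^\varphi_k,p^\varphi_k\rangle:k<\omega\rangle$ with $p^\varphi_k\in\omega\cup\{-1\}$, such that the support $|\varphi|=\{k:p^\varphi_k\ne-1\}$ is finite; for $k\in|\varphi|$, $\tau^\varphi_k=\langle T^\varphi_k(0),\dots,T^\varphi_k(p^\varphi_k)\rangle$ with each $T^\varphi_k(n)\in\mathbf{LT}$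 and $T^\varphi_k(n)\subseteq_n T^\varphi_k(n-1)$ for $1\le n\le p^\varphi_k$; for $k\notin|\varphi|$, $\tau^\varphi_k$ is empty. $\psi\preccurlyeq\varphi$ means $|\psi|\subseteq|\varphi|$ and for $k\in|\psi|$: $p^\varphi_k\ge p^\psi_k$ and $T^\varphi_k(n)=T^\psi_k(n)$ for all $n\le p^\psi_k$. $\mathbf{MT}(\mathbb P)$ is the set of multitrees $\varphi$ with $T^\varphi_k(n)\in\mathbf{LC}_n(\mathbb P)$ for all $k\in|\varphi|$, $n\le p^\varphi_k$. Construction. $\mathrm{ZFC}'$ is ZFC without the power set axiom plus the axiom that $\mathcal P(\omega)$ exists. Let $\mathfrak M$ be a countable transitive model of $\mathrm{ZFC}'$ and $\mathbb P\in\mathfrak M$ an LTF. Let $\Phi=\langle\varphi(j):j<\omega\rangle$ be a $\preccurlyeq$-increasing sequence in $\mathbf{MT}(\mathbb P)$ meeting every set $D\in\mathfrak M$, $D\subseteq\mathbf{MT}(\mathbb P)$, which is dense (every $\psi\in\mathbf{MT}(\mathbb P)$ has some $\varphi\in D$ with $\psi\preccurlyeq\varphi$). Then for each $k$ there are trees $T^\Phi_k(n)\in\mathbf{LC}_n(\mathbb P)$, $n<\omega$, with $T^\Phi_k(n+1)\subseteq_{n+1}T^\Phi_k(n)$, such that $T^{\varphi(j)}_k(n)=T^\Phi_k(n)$ whenever $k\in|\varphi(j)|$ and $n\le p^{\varphi(j)}_k$. Put $U^\Phi_k=\bigcap_n T^\Phi_k(n)\in\mathbf{LT}$, $U^\Phi_k(s)=U^\Phi_k(\to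 s)$ for $s\in 2^{<\omega}$, and $\mathbb U=\{\sigma\cdot U^\Phi_k(s):k<\omega,\ s,\sigma\in 2^{<\omega}\}$. *)

theory Defs
  imports Main "HOL-Library.Sublist"
begin

text \<open>Finite binary strings are bool lists (False = 0, True = 1); trees are sets of strings.\<close>

type_synonym str = "bool list"
type_synonym tree = "bool list set"

definition dot :: "str \<Rightarrow> str \<Rightarrow> str" where
  "dot s t = map (\<lambda>k. if k < length s then (s ! k \<noteq> t ! k) else t ! k) [0..<length t]"

definition shiftT :: "str \<Rightarrow> tree \<Rightarrow> tree" where
  "shiftT s T = dot s ` T"

definition restr :: "tree \<Rightarrow> str \<Rightarrow> tree" where
  "restr T u = {t \<in> T. prefix u t \<or> prefix t u}"

text \<open>Large trees: witnessed by stem r and strings q n i.\<close>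
definition LT_wit :: "tree \<Rightarrow> str \<Rightarrow> (nat \<Rightarrow> bool \<Rightarrow> str) \<Rightarrow> bool" where
  "LT_wit T r q \<longleftrightarrow>
     (\<forall>n. length (q n False) = length (q n True) \<and> length (q n False) \<ge> 1
          \<and> q n False ! 0 = False \<and> q n True ! 0 = True) \<and>
     T = {t. \<exists>n is. length is = Suc n \<and>
                 prefix t (r @ concat (map (\<lambda>m. q m (is ! m)) [0..<Suc n]))}"

definition LT :: "tree \<Rightarrow> bool" where
  "LT T \<longleftrightarrow> (\<exists>r q. LT_wit T r q)"

definition stem :: "tree \<Rightarrow> str" where
  "stem T = (THE s. s \<in> T \<and> T = restr T s \<and> (\<forall>u. u \<in> T \<and> T = restr T u \<longrightarrow> prefix u s))"

definition spl :: "tree \<Rightarrow> nat \<Rightarrow> nat" where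
  "spl T n = (SOME v. \<exists>r q. LT_wit T r q \<and> v = length r + (\<Sum>m<n. length (q m False)))"

definition goto1 :: "tree \<Rightarrow> bool \<Rightarrow> tree" where
  "goto1 T i = restr T (stem T @ [i])"

fun goto :: "tree \<Rightarrow> str \<Rightarrow> tree" where
  "goto T [] = T"
| "goto T (i # s) = goto (goto1 T i) s"

definition subn :: "tree \<Rightarrow> tree \<Rightarrow> nat \<Rightarrow> bool" where
  "subn S T n \<longleftrightarrow> LT S \<and> LT T \<and> S \<subseteq> T \<and> (\<forall>k<n. spl S k = spl T k)"

definition LTF :: "tree set \<Rightarrow> bool" where
  "LTF P \<longleftrightarrow> (\<forall>T\<in>P. LT T) \<and> (\<forall>T\<in>P. \<forall>u\<in>T. restr T u \<in> P)
             \<and> (\<forall>T\<in>P. \<forall>s. shiftT s T \<in> P)"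

definition LC :: "nat \<Rightarrow> tree set \<Rightarrow> tree set" where
  "LC n P = {T. LT T \<and> (\<forall>s. length s = n \<longrightarrow> goto T s \<in> P)}"

text \<open>Multitrees: component k is the list tau_k = [T_k(0),...,T_k(p_k)], so p_k = length - 1
  and p_k = -1 iff the list is empty.\<close>
type_synonym mtree = "nat \<Rightarrow> tree list"

definition supp :: "mtree \<Rightarrow> nat set" where
  "supp \<phi> = {k. \<phi> k \<noteq> []}"

definition is_multitree :: "mtree \<Rightarrow> bool" where
  "is_multitree \<phi> \<longleftrightarrow> finite (supp \<phi>) \<and>
     (\<forall>k. (\<forall>n<length (\<phi> k). LT (\<phi> k ! n)) \<and>
          (\<forall>n. 1 \<le> n \<and> n < length (\<phi> k) \<longrightarrow> subn (\<phi> k ! n) (\<phi> k ! (n - 1)) n))"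

definition mt_le :: "mtree \<Rightarrow> mtree \<Rightarrow> bool" where
  "mt_le \<psi> \<phi> \<longleftrightarrow> (\<forall>k. \<psi> k \<noteq> [] \<longrightarrow> prefix (\<psi> k) (\<phi> k))"

definition MT :: "tree set \<Rightarrow> mtree set" where
  "MT P = {\<phi>. is_multitree \<phi> \<and> (\<forall>k n. n < length (\<phi> k) \<longrightarrow> \<phi> k ! n \<in> LC n P)}"

definition dense_MT :: "tree set \<Rightarrow> mtree set \<Rightarrow> bool" where
  "dense_MT P X \<longleftrightarrow> X \<subseteq> MT P \<and> (\<forall>\<psi>\<in>MT P. \<exists>\<phi>\<in>X. mt_le \<psi> \<phi>)"

text \<open>The following set of multitrees is definable in the ground model from D, P and k;
  it is used to express that such sets belong to the model.\<close>
definition cover_set :: "tree set \<Rightarrow> tree set \<Rightarrow> nat \<Rightarrow> mtree set" where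
  "cover_set P D k = {\<phi> \<in> MT P. k \<in> supp \<phi> \<and>
      (\<forall>s. length s = length (\<phi> k) - 1 \<longrightarrow> (\<exists>S\<in>D. goto (last (\<phi> k)) s \<subseteq> S))}"

definition predense :: "tree set \<Rightarrow> tree set \<Rightarrow> bool" where
  "predense D Q \<longleftrightarrow> (\<forall>T\<in>Q. \<exists>S\<in>D. \<exists>R\<in>Q. R \<subseteq> T \<and> R \<subseteq> S)"

definition Uk :: "(nat \<Rightarrow> nat \<Rightarrow> tree) \<Rightarrow> nat \<Rightarrow> tree" where
  "Uk TP k = (\<Inter>n. TP k n)"

definition UU :: "(nat \<Rightarrow> nat \<Rightarrow> tree) \<Rightarrow> tree set" where
  "UU TP = {shiftT \<sigma> (goto (Uk TP k) s) | k s \<sigma>. True}"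

end

theory Submission
  imports Defs
begin

text \<open>
  A large tree is determined by its stem r and its splitting strings q n i, and its cone
  T(\<rightarrow>s) is again the large tree whose stem is r followed by the strings selected by s.
  Genericity of \<Phi> against the dense sets cover_set P (\<sigma>\<cdot>D) k yields, for all k and \<sigma>, a level p
  at which each of the 2^p cones of T^\<Phi>_k(p) lies in \<sigma>\<cdot>S for some S \<in> D. These sets are dense
  because, using pre-density of D, one can graft below each cone of the last tree of a multitree
  a condition of P contained in an element of D without moving the lower splitting levels.
  Since U^\<Phi>_k \<subseteq> T^\<Phi>_k(p) is the union of these cones, \<sigma>\<cdot>U^\<Phi>_k(s) is covered by finitely many
  members of D. The fusion sequence T^\<Phi>_k(n) fixes its first p splitting strings from stage p on,
  so every cone of U^\<Phi>_k at a level \<ge> p lies in a cone of T^\<Phi>_k(p);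
  hence D is pre-dense in UU TP.
\<close>

section \<open>Large trees given by stem and splitting strings\<close>

definition splitting_strings :: "(nat \<Rightarrow> bool \<Rightarrow> str) \<Rightarrow> bool" where
  "splitting_strings q \<longleftrightarrow> (\<forall>n. length (q n False) = length (q n True) \<and> length (q n False) \<ge> 1
     \<and> q n False ! 0 = False \<and> q n True ! 0 = True)"

definition branch_word :: "(nat \<Rightarrow> bool \<Rightarrow> str) \<Rightarrow> (nat \<Rightarrow> bool) \<Rightarrow> nat \<Rightarrow> str" where
  "branch_word q f N = concat (map (\<lambda>m. q m (f m)) [0..<N])"

definition large_tree :: "str \<Rightarrow> (nat \<Rightarrow> bool \<Rightarrow> str) \<Rightarrow> tree" where
  "large_tree r q = {y. \<exists>f N. prefix y (r @ branch_word q f N)}"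

lemma splitting_strings_length:
  "splitting_strings q \<Longrightarrow> length (q n i) = length (q n False)"
  unfolding splitting_strings_def by (cases i) auto

lemma splitting_strings_Cons:
  assumes "splitting_strings q" shows "q n i = i # tl (q n i)"
proof -
  have "q n i \<noteq> [] \<and> q n i ! 0 = i"
    using assms unfolding splitting_strings_def by (cases i) (auto dest: spec[of _ n])
  thus ?thesis by (cases "q n i") auto
qed

lemma splitting_strings_length_pos: "splitting_strings q \<Longrightarrow> 1 \<le> length (q n i)"
  by (subst splitting_strings_Cons[of q n i]) auto

lemma splitting_strings_shift: "splitting_strings q \<Longrightarrow> splitting_strings (\<lambda>m. q (m + k))"
  unfolding splitting_strings_def by blast

lemma splitting_strings_Suc: "splitting_strings q \<Longrightarrow> splitting_strings (\<lambda>m. q (Suc m))"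
  unfolding splitting_strings_def by blast

lemma branch_word_0 [simp]: "branch_word q f 0 = []"
  by (simp add: branch_word_def)

lemma branch_word_Suc: "branch_word q f (Suc N) = branch_word q f N @ q N (f N)"
  by (simp add: branch_word_def)

lemma branch_word_Suc':
  "branch_word q f (Suc N) = q 0 (f 0) @ branch_word (\<lambda>m. q (Suc m)) (\<lambda>m. f (Suc m)) N"
  by (induction N) (simp_all add: branch_word_Suc)

lemma branch_word_add:
  "branch_word q f (a + b) = branch_word q f a @ branch_word (\<lambda>m. q (m + a)) (\<lambda>m. f (m + a)) b"
  by (induction b) (simp_all add: branch_word_Suc add.commute)

lemma branch_word_prefix_mono: "a \<le> b \<Longrightarrow> prefix (branch_word q f a) (branch_word q f b)"
  using branch_word_add[of q f a "b - a"] by simp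

lemma branch_word_cong:
  "(\<And>m. m < N \<Longrightarrow> q m (f m) = q' m (g m)) \<Longrightarrow> branch_word q f N = branch_word q' g N"
  unfolding branch_word_def by (rule arg_cong[where f=concat]) auto

lemma length_branch_word:
  "splitting_strings q \<Longrightarrow> length (branch_word q f N) = (\<Sum>m<N. length (q m False))"
proof (induction N)
  case (Suc N)
  thus ?case using splitting_strings_length[OF Suc.prems, of N "f N"] by (simp add: branch_word_Suc)
qed simp

lemma length_branch_word_ge: "splitting_strings q \<Longrightarrow> N \<le> length (branch_word q f N)"
proof (induction N)
  case (Suc N)
  thus ?case using splitting_strings_length_pos[OF Suc.prems, of N "f N"]
    by (simp add: branch_word_Suc)
qed simp

lemma LT_wit_iff: "LT_wit T r q \<longleftrightarrow> splitting_strings q \<and> T = large_tree r q"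
proof -
  have eq: "{t. \<exists>n is. length is = Suc n \<and>
      prefix t (r @ concat (map (\<lambda>m. q m (is ! m)) [0..<Suc n]))} = large_tree r q"
  proof (intro set_eqI iffI)
    fix t assume "t \<in> {t. \<exists>n is. length is = Suc n \<and>
      prefix t (r @ concat (map (\<lambda>m. q m (is ! m)) [0..<Suc n]))}"
    then obtain n "is" where "prefix t (r @ branch_word q (\<lambda>m. is ! m) (Suc n))"
      by (auto simp: branch_word_def)
    thus "t \<in> large_tree r q" unfolding large_tree_def by blast
  next
    fix t assume "t \<in> large_tree r q"
    then obtain f N where "prefix t (r @ branch_word q f N)" unfolding large_tree_def by blast
    moreover have "prefix (branch_word q f N) (branch_word q f (Suc N))"
      by (rule branch_word_prefix_mono) simp
    ultimately have "prefix t (r @ branch_word q f (Suc N))"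
      by (meson prefix_order.trans same_prefix_prefix)
    moreover have "branch_word q f (Suc N)
        = concat (map (\<lambda>m. q m (map f [0..<Suc N] ! m)) [0..<Suc N])"
      unfolding branch_word_def by (rule arg_cong[where f=concat]) (auto simp del: upt_Suc)
    ultimately show "t \<in> {t. \<exists>n is. length is = Suc n \<and>
        prefix t (r @ concat (map (\<lambda>m. q m (is ! m)) [0..<Suc n]))}"
      by (intro CollectI exI[of _ N] exI[of _ "map f [0..<Suc N]"]) simp
  qed
  show ?thesis unfolding LT_wit_def splitting_strings_def eq ..
qed

lemma LT_iff_large_tree: "LT T \<longleftrightarrow> (\<exists>r q. splitting_strings q \<and> T = large_tree r q)"
  unfolding LT_def LT_wit_iff by blast

lemma prefix_nth: "prefix a b \<Longrightarrow> k < length a \<Longrightarrow> a ! k = b ! k"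
  by (auto simp: prefix_def nth_append)

lemma prefix_same_length_eq: "prefix a b \<Longrightarrow> length a = length b \<Longrightarrow> a = b"
  by (auto simp: prefix_def)

lemma prefix_stem_in_large_tree: "prefix y r \<Longrightarrow> y \<in> large_tree r q"
  unfolding large_tree_def by (intro CollectI exI[of _ undefined] exI[of _ 0]) simp

lemma large_tree_comparable_stem: "y \<in> large_tree r q \<Longrightarrow> prefix y r \<or> prefix r y"
  unfolding large_tree_def using prefix_same_cases[of y _ r] by (auto intro: prefix_order.trans)

lemma restr_subset: "restr T u \<subseteq> T"
  unfolding restr_def by auto

lemma restr_mono: "S \<subseteq> T \<Longrightarrow> restr S u \<subseteq> restr T u"
  unfolding restr_def by auto

lemma restr_restr: "prefix a b \<Longrightarrow> restr (restr T a) b = restr T b"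
  unfolding restr_def using prefix_same_cases by (auto intro: prefix_order.trans)

lemma restr_large_tree_stem: "restr (large_tree r q) r = large_tree r q"
  unfolding restr_def using large_tree_comparable_stem by blast

lemma large_tree_child_subset: "large_tree (r @ q 0 i) (\<lambda>m. q (Suc m)) \<subseteq> large_tree r q"
proof
  fix x assume "x \<in> large_tree (r @ q 0 i) (\<lambda>m. q (Suc m))"
  then obtain f N where "prefix x (r @ q 0 i @ branch_word (\<lambda>m. q (Suc m)) f N)"
    unfolding large_tree_def by auto
  hence "prefix x (r @ branch_word q (\<lambda>m. if m = 0 then i else f (m - 1)) (Suc N))"
    by (simp add: branch_word_Suc')
  thus "x \<in> large_tree r q" unfolding large_tree_def by blast
qed

lemma large_tree_mem_through_child:
  assumes q: "splitting_strings q" and x: "x \<in> large_tree r q" and ri_x: "prefix (r @ [i]) x"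
  shows "x \<in> large_tree (r @ q 0 i) (\<lambda>m. q (Suc m))"
proof -
  from x obtain f N where p: "prefix x (r @ branch_word q f N)" unfolding large_tree_def by blast
  have "N \<noteq> 0"
    using p ri_x prefix_length_le[of x r] prefix_length_le[OF ri_x] by (cases N) auto
  then obtain M where N: "N = Suc M" by (cases N) auto
  have word: "r @ branch_word q f N
      = r @ q 0 (f 0) @ branch_word (\<lambda>m. q (Suc m)) (\<lambda>m. f (Suc m)) M"
    by (simp add: N branch_word_Suc')
  have "i = x ! length r" using prefix_nth[OF ri_x, of "length r"] by simp
  also have "\<dots> = (r @ branch_word q f N) ! length r"
    using prefix_nth[OF p, of "length r"] prefix_length_le[OF ri_x] by simp
  also have "\<dots> = f 0"
    unfolding word by (subst splitting_strings_Cons[OF q, of 0 "f 0"]) (simp add: nth_append)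
  finally have "prefix x (r @ q 0 i @ branch_word (\<lambda>m. q (Suc m)) (\<lambda>m. f (Suc m)) M)"
    using p word by simp
  thus ?thesis unfolding large_tree_def by (intro CollectI exI) simp
qed

lemma restr_large_tree_child:
  assumes q: "splitting_strings q"
  shows "restr (large_tree r q) (r @ [i]) = large_tree (r @ q 0 i) (\<lambda>m. q (Suc m))"
proof (intro set_eqI iffI)
  have ri: "prefix (r @ [i]) (r @ q 0 i)"
    by (subst splitting_strings_Cons[OF q, of 0 i]) simp
  fix x
  show "x \<in> restr (large_tree r q) (r @ [i])" if x: "x \<in> large_tree (r @ q 0 i) (\<lambda>m. q (Suc m))"
  proof -
    have "prefix x (r @ q 0 i) \<or> prefix (r @ q 0 i) x" by (rule large_tree_comparable_stem[OF x])
    hence "prefix x (r @ [i]) \<or> prefix (r @ [i]) x"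
      using ri prefix_same_cases prefix_order.trans by blast
    thus ?thesis using large_tree_child_subset x unfolding restr_def by blast
  qed
  show "x \<in> large_tree (r @ q 0 i) (\<lambda>m. q (Suc m))" if x: "x \<in> restr (large_tree r q) (r @ [i])"
  proof (cases "prefix x (r @ [i])")
    case True
    hence "prefix x (r @ q 0 i)" using ri by (rule prefix_order.trans)
    thus ?thesis by (rule prefix_stem_in_large_tree)
  next
    case False
    with x show ?thesis using large_tree_mem_through_child[OF q] unfolding restr_def by blast
  qed
qed

lemma prefix_child_in_large_tree: "prefix y (r @ q 0 i) \<Longrightarrow> y \<in> large_tree r q"
  using large_tree_child_subset prefix_stem_in_large_tree by blast

lemma restr_large_tree_eq_imp_prefix_stem:
  assumes q: "splitting_strings q"
    and u: "u \<in> large_tree r q" "large_tree r q = restr (large_tree r q) u"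
  shows "prefix u r"
proof (rule ccontr)
  let ?T = "large_tree r q"
  assume nu: "\<not> prefix u r"
  hence "prefix r u" using u large_tree_comparable_stem by blast
  with nu have lt: "length r < length u"
    by (metis nat_less_le prefix_length_le prefix_length_prefix prefix_order.order_refl)
  \<comment> \<open>the sibling of the branch through u leaves the tree restricted to u\<close>
  let ?z = "r @ q 0 (\<not> u ! length r)"
  have "?z \<in> ?T" by (rule prefix_child_in_large_tree[of _ r q "\<not> u ! length r"]) simp
  hence "?z \<in> restr ?T u" by (subst u(2)[symmetric])
  hence cmp: "prefix ?z u \<or> prefix u ?z" unfolding restr_def by auto
  have zr: "?z ! length r = (\<not> u ! length r)" and lz: "length r < length ?z"
    by (subst splitting_strings_Cons[OF q, of 0 "\<not> u ! length r"], simp)+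
  from cmp show False
  proof
    assume "prefix ?z u" thus False using prefix_nth[of ?z u "length r"] zr lz by simp
  next
    assume "prefix u ?z" thus False using prefix_nth[of u ?z "length r"] zr lt by simp
  qed
qed

lemma stem_large_tree:
  assumes q: "splitting_strings q" shows "stem (large_tree r q) = r"
  unfolding stem_def
proof (rule the_equality)
  let ?T = "large_tree r q"
  note maximal = restr_large_tree_eq_imp_prefix_stem[OF q]
  have r_in: "r \<in> ?T" and r_restr: "?T = restr ?T r"
    by (simp_all add: prefix_stem_in_large_tree restr_large_tree_stem)
  thus "r \<in> ?T \<and> ?T = restr ?T r \<and> (\<forall>u. u \<in> ?T \<and> ?T = restr ?T u \<longrightarrow> prefix u r)"
    using maximal by blast
  fix s assume s: "s \<in> ?T \<and> ?T = restr ?T s \<and> (\<forall>u. u \<in> ?T \<and> ?T = restr ?T u \<longrightarrow> prefix u s)"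
  hence "prefix r s" using r_in r_restr by blast
  moreover have "prefix s r" using s maximal by blast
  ultimately show "s = r" using prefix_order.antisym by blast
qed

lemma goto1_large_tree:
  "splitting_strings q \<Longrightarrow> goto1 (large_tree r q) i = large_tree (r @ q 0 i) (\<lambda>m. q (Suc m))"
  unfolding goto1_def by (simp add: stem_large_tree restr_large_tree_child)

lemma goto_large_tree:
  "splitting_strings q \<Longrightarrow> goto (large_tree r q) s
     = large_tree (r @ branch_word q (nth s) (length s)) (\<lambda>m. q (m + length s))"
proof (induction s arbitrary: r q)
  case (Cons i s)
  thus ?case
    using Cons.IH[of "\<lambda>m. q (Suc m)" "r @ q 0 i"]
    by (simp add: goto1_large_tree splitting_strings_Suc branch_word_Suc')
qed simp

lemma goto_large_tree_eq_restr:
  "splitting_strings q \<Longrightarrow>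
     goto (large_tree r q) s = restr (large_tree r q) (r @ branch_word q (nth s) (length s))"
proof (induction s arbitrary: r q)
  case Nil thus ?case by (simp add: restr_large_tree_stem)
next
  case (Cons i s)
  let ?w = "r @ branch_word q (nth (i # s)) (length (i # s))"
  have w: "?w = r @ q 0 i @ branch_word (\<lambda>m. q (Suc m)) (nth s) (length s)"
    by (simp add: branch_word_Suc')
  have "goto (large_tree r q) (i # s) = goto (large_tree (r @ q 0 i) (\<lambda>m. q (Suc m))) s"
    by (simp add: goto1_large_tree Cons.prems)
  also have "\<dots> = restr (restr (large_tree r q) (r @ [i])) ?w"
    using Cons.IH[OF splitting_strings_Suc[OF Cons.prems], of "r @ q 0 i"]
      restr_large_tree_child[OF Cons.prems, of r i] w by simp
  also have "\<dots> = restr (large_tree r q) ?w"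
    by (rule restr_restr) (simp only: w, subst splitting_strings_Cons[OF Cons.prems, of 0 i], simp)
  finally show ?case .
qed

lemma goto_subset: "goto T s \<subseteq> T"
proof (induction s arbitrary: T)
  case (Cons i s) thus ?case using restr_subset[of T] by (simp add: goto1_def) blast
qed simp

lemma goto_append: "goto T (a @ b) = goto (goto T a) b"
  by (induction a arbitrary: T) simp_all

lemma large_tree_unique:
  assumes "splitting_strings q" "splitting_strings q'" "large_tree r q = large_tree r' q'"
  shows "r = r' \<and> q m i = q' m i"
  using assms
proof (induction m arbitrary: r q r' q')
  case 0
  have "r = r'" using stem_large_tree 0 by metis
  moreover have "goto1 (large_tree r q) i = goto1 (large_tree r' q') i" using 0(3) by simp
  hence "r @ q 0 i = r' @ q' 0 i"
    using stem_large_tree splitting_strings_Suc 0(1,2) by (metis goto1_large_tree)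
  ultimately show ?case by simp
next
  case (Suc m)
  have "r = r'" using stem_large_tree Suc.prems by metis
  moreover have "goto1 (large_tree r q) i = goto1 (large_tree r' q') i" using Suc.prems(3) by simp
  hence "large_tree (r @ q 0 i) (\<lambda>m. q (Suc m)) = large_tree (r' @ q' 0 i) (\<lambda>m. q' (Suc m))"
    by (simp add: goto1_large_tree Suc.prems(1,2))
  ultimately show ?case
    using Suc.IH[OF splitting_strings_Suc[OF Suc.prems(1)] splitting_strings_Suc[OF Suc.prems(2)]]
    by simp
qed

lemma spl_large_tree:
  assumes q: "splitting_strings q"
  shows "spl (large_tree r q) n = length r + (\<Sum>m<n. length (q m False))"
proof -
  let ?P = "\<lambda>v. \<exists>r' q'. LT_wit (large_tree r q) r' q' \<and> v = length r' + (\<Sum>m<n. length (q' m False))"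
  have "?P (length r + (\<Sum>m<n. length (q m False)))" using q by (auto simp: LT_wit_iff)
  hence "?P (spl (large_tree r q) n)" unfolding spl_def by (rule someI)
  then obtain r' q' where "splitting_strings q'" "large_tree r q = large_tree r' q'"
    "spl (large_tree r q) n = length r' + (\<Sum>m<n. length (q' m False))"
    by (auto simp: LT_wit_iff)
  with large_tree_unique[OF q, of q' r r'] show ?thesis by simp
qed

lemma large_tree_eq_Union_goto:
  assumes q: "splitting_strings q"
  shows "large_tree r q = (\<Union>s\<in>{s. length s = n}. goto (large_tree r q) s)"
proof (intro equalityI subsetI)
  fix y assume "y \<in> large_tree r q"
  then obtain f N where "prefix y (r @ branch_word q f N)" unfolding large_tree_def by blast
  hence "prefix y (r @ branch_word q f (max N n))"
    using branch_word_prefix_mono[of N "max N n" q f]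
    by (meson max.cobounded1 prefix_order.trans same_prefix_prefix)
  also have "branch_word q f (max N n)
      = branch_word q f n @ branch_word (\<lambda>m. q (m + n)) (\<lambda>m. f (m + n)) (max N n - n)"
    using branch_word_add[of q f n "max N n - n"] by simp
  also have "branch_word q f n = branch_word q (nth (map f [0..<n])) n"
    by (rule branch_word_cong) simp
  finally have "y \<in> large_tree (r @ branch_word q (nth (map f [0..<n])) (length (map f [0..<n])))
      (\<lambda>m. q (m + length (map f [0..<n])))"
    unfolding large_tree_def by (auto intro!: exI)
  hence "y \<in> goto (large_tree r q) (map f [0..<n])" by (simp only: goto_large_tree[OF q])
  thus "y \<in> (\<Union>s\<in>{s. length s = n}. goto (large_tree r q) s)" by force
qed (use goto_subset in blast)

lemma large_tree_subset_imp_prefix_stem: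
  assumes q': "splitting_strings q'" and sub: "large_tree r' q' \<subseteq> large_tree r q"
  shows "prefix r r'"
proof (rule ccontr)
  assume nr: "\<not> prefix r r'"
  have "r' \<in> large_tree r q" using sub prefix_stem_in_large_tree[of r' r' q'] by blast
  hence "prefix r' r" using nr large_tree_comparable_stem by blast
  with nr have lt: "length r' < length r"
    by (metis prefix_length_less prefix_order.order_refl strict_prefixI)
  \<comment> \<open>both successors of r' lie in the smaller tree, so r cannot extend either of them\<close>
  have "r ! length r' = b" for b
  proof -
    have "prefix (r' @ [b]) (r' @ q' 0 b)"
      by (subst splitting_strings_Cons[OF q', of 0 b]) simp
    hence "r' @ [b] \<in> large_tree r q" using sub prefix_child_in_large_tree by blast
    hence "prefix (r' @ [b]) r \<or> prefix r (r' @ [b])" by (rule large_tree_comparable_stem)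
    hence "prefix (r' @ [b]) r"
      using prefix_length_prefix[of "r' @ [b]" "r' @ [b]" r] lt by auto
    thus ?thesis using prefix_nth[of "r' @ [b]" r "length r'"] by simp
  qed
  from this[of True] this[of False] show False by simp
qed

section \<open>Translates\<close>

lemma dot_length [simp]: "length (dot s t) = length t"
  by (simp add: dot_def)

lemma dot_nth: "k < length t \<Longrightarrow> dot s t ! k = (if k < length s then s ! k \<noteq> t ! k else t ! k)"
  by (simp add: dot_def)

lemma dot_dot [simp]: "dot s (dot s t) = t"
  by (rule nth_equalityI) (auto simp: dot_nth)

lemma dot_prefix_mono: "prefix y z \<Longrightarrow> prefix (dot s y) (dot s z)"
proof -
  assume "prefix y z"
  hence "y = take (length y) z" by (metis append_eq_conv_conj prefix_def)
  moreover have "dot s (take n z) = take n (dot s z)" for n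
    by (rule nth_equalityI) (auto simp: dot_nth)
  ultimately show ?thesis by (metis take_is_prefix)
qed

lemma dot_dot_append: "length a = length b \<Longrightarrow> dot (dot a b) (b @ x) = a @ x"
  by (rule nth_equalityI) (auto simp: dot_nth nth_append)

lemma dot_dot_append': "length a = length b \<Longrightarrow> dot (dot a b) (a @ x) = b @ x"
  by (rule nth_equalityI) (auto simp: dot_nth nth_append)

lemma shiftT_shiftT [simp]: "shiftT s (shiftT s T) = T"
  unfolding shiftT_def image_image by simp

lemma shiftT_mono: "S \<subseteq> T \<Longrightarrow> shiftT s S \<subseteq> shiftT s T"
  unfolding shiftT_def by blast

lemma shiftT_Union: "shiftT s (\<Union>A) = \<Union>(shiftT s ` A)"
  unfolding shiftT_def by blast

lemma shiftT_large_tree: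
  assumes l: "length a = length b"
  shows "shiftT (dot a b) (large_tree (b @ x) q) = large_tree (a @ x) q"
proof (intro equalityI subsetI)
  fix y assume "y \<in> shiftT (dot a b) (large_tree (b @ x) q)"
  then obtain z f N where y: "y = dot (dot a b) z" and "prefix z (b @ x @ branch_word q f N)"
    unfolding shiftT_def large_tree_def by auto
  hence "prefix y (dot (dot a b) (b @ x @ branch_word q f N))" by (simp add: dot_prefix_mono)
  thus "y \<in> large_tree (a @ x) q" unfolding large_tree_def by (auto simp: dot_dot_append[OF l])
next
  fix y assume "y \<in> large_tree (a @ x) q"
  then obtain f N where "prefix y (a @ x @ branch_word q f N)" unfolding large_tree_def by auto
  hence "prefix (dot (dot a b) y) (dot (dot a b) (a @ x @ branch_word q f N))"
    by (rule dot_prefix_mono)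
  hence "dot (dot a b) y \<in> large_tree (b @ x) q"
    unfolding large_tree_def by (auto simp: dot_dot_append'[OF l])
  thus "y \<in> shiftT (dot a b) (large_tree (b @ x) q)"
    unfolding shiftT_def by (metis dot_dot image_eqI)
qed

lemma large_tree_subset_same_levels:
  assumes "splitting_strings q" "splitting_strings q'" "large_tree r' q' \<subseteq> large_tree r q"
    and "length r' = length r" and "\<forall>m<N. length (q' m False) = length (q m False)"
  shows "r' = r \<and> (\<forall>m<N. q' m = q m)"
  using assms
proof (induction N arbitrary: r r' q q')
  case 0
  thus ?case
    using prefix_same_length_eq[OF large_tree_subset_imp_prefix_stem[OF 0(2,3)]] by simp
next
  case (Suc N)
  have rr: "r' = r"
    using prefix_same_length_eq[OF large_tree_subset_imp_prefix_stem[OF Suc.prems(2,3)]]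
      Suc.prems(4) by simp
  have lenN: "\<forall>m<N. length (q' (Suc m) False) = length (q (Suc m) False)"
    using Suc.prems(5) by simp
  have step: "q' 0 i = q 0 i \<and> (\<forall>m<N. q' (Suc m) = q (Suc m))" for i
  proof -
    have "restr (large_tree r q') (r @ [i]) \<subseteq> restr (large_tree r q) (r @ [i])"
      using Suc.prems(3) rr by (simp add: restr_mono)
    hence "large_tree (r @ q' 0 i) (\<lambda>m. q' (Suc m)) \<subseteq> large_tree (r @ q 0 i) (\<lambda>m. q (Suc m))"
      by (simp only: restr_large_tree_child Suc.prems(1,2))
    moreover have "length (r @ q' 0 i) = length (r @ q 0 i)"
      using splitting_strings_length[OF Suc.prems(1), of 0 i]
        splitting_strings_length[OF Suc.prems(2), of 0 i] Suc.prems(5) by simp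
    ultimately have "r @ q' 0 i = r @ q 0 i \<and> (\<forall>m<N. q' (Suc m) = q (Suc m))"
      by (rule Suc.IH[OF splitting_strings_Suc[OF Suc.prems(1)] splitting_strings_Suc[OF Suc.prems(2)]
          _ _ lenN])
    thus ?thesis by simp
  qed
  have "q' m = q m" if "m < Suc N" for m
    using that step by (cases m) auto
  with rr show ?case by simp
qed

lemma subn_large_tree:
  assumes "splitting_strings q" "splitting_strings q'"
    and "subn (large_tree r' q') (large_tree r q) (Suc n)"
  shows "r' = r \<and> (\<forall>m<n. q' m = q m)"
proof -
  have spl: "length r' + (\<Sum>m<k. length (q' m False)) = length r + (\<Sum>m<k. length (q m False))"
    if "k \<le> n" for k
    using assms that unfolding subn_def by (simp add: spl_large_tree)
  have "length (q' m False) = length (q m False)" if "m < n" for m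
    using spl[of m] spl[of "Suc m"] that by simp
  hence "\<forall>m<n. length (q' m False) = length (q m False)" by blast
  moreover have "length r' = length r" using spl[of 0] by simp
  moreover have "large_tree r' q' \<subseteq> large_tree r q" using assms(3) unfolding subn_def by simp
  ultimately show ?thesis using large_tree_subset_same_levels[OF assms(1,2)] by blast
qed

section \<open>Refining the last tree of a multitree\<close>

lemma LTF_LT: "LTF P \<Longrightarrow> T \<in> P \<Longrightarrow> LT T"
  unfolding LTF_def by blast

lemma LTF_shiftT: "LTF P \<Longrightarrow> T \<in> P \<Longrightarrow> shiftT s T \<in> P"
  unfolding LTF_def by blast

lemma LTF_restr: "LTF P \<Longrightarrow> T \<in> P \<Longrightarrow> u \<in> T \<Longrightarrow> restr T u \<in> P"
  unfolding LTF_def by blast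

definition graft ::
    "(nat \<Rightarrow> bool \<Rightarrow> str) \<Rightarrow> nat \<Rightarrow> str \<Rightarrow> (nat \<Rightarrow> bool \<Rightarrow> str) \<Rightarrow> nat \<Rightarrow> bool \<Rightarrow> str" where
  "graft q n rest qR m = (if m < n then q m else if m = n then (\<lambda>i. q m i @ rest) else qR (m - Suc n))"

lemma splitting_strings_graft:
  assumes "splitting_strings q" and "splitting_strings qR"
  shows "splitting_strings (graft q n rest qR)"
  unfolding splitting_strings_def
proof
  fix m
  show "length (graft q n rest qR m False) = length (graft q n rest qR m True)
      \<and> 1 \<le> length (graft q n rest qR m False)
      \<and> graft q n rest qR m False ! 0 = False \<and> graft q n rest qR m True ! 0 = True"
    using assms unfolding splitting_strings_def graft_def
    by (auto dest: spec[of _ m] spec[of _ "m - Suc n"] simp: nth_append)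
qed

lemma goto_large_tree_graft:
  assumes q: "splitting_strings q" and qR: "splitting_strings qR" and u: "length u = Suc n"
  shows "goto (large_tree r (graft q n rest qR)) u
    = large_tree (r @ branch_word q (nth u) (Suc n) @ rest) qR"
proof -
  have "branch_word (graft q n rest qR) (nth u) n = branch_word q (nth u) n"
    by (rule branch_word_cong) (simp add: graft_def)
  hence "branch_word (graft q n rest qR) (nth u) (Suc n) = branch_word q (nth u) (Suc n) @ rest"
    by (simp add: branch_word_Suc graft_def)
  moreover have "(\<lambda>m. graft q n rest qR (m + Suc n)) = qR" by (simp add: graft_def)
  ultimately show ?thesis
    using goto_large_tree[OF splitting_strings_graft[OF q qR, of n rest], of r u] u by simp
qed

lemma graft_into_cone:
  assumes q: "splitting_strings q" and t: "length t = Suc n" and P: "LTF P"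
    and R: "R \<in> P" and R_sub: "R \<subseteq> goto (large_tree r q) t"
  obtains q' where "splitting_strings q'" and "\<forall>m<n. q' m = q m"
    and "\<And>u. length u = Suc n \<Longrightarrow>
           goto (large_tree r q') u \<in> P \<and> goto (large_tree r q') u \<subseteq> goto (large_tree r q) u"
    and "goto (large_tree r q') t = R"
proof -
  obtain rR qR where qR: "splitting_strings qR" and R_eq: "R = large_tree rR qR"
    using LTF_LT[OF P R] unfolding LT_iff_large_tree by blast
  define w where "w u = r @ branch_word q (nth u) (Suc n)" for u
  have goto_q: "goto (large_tree r q) u = large_tree (w u) (\<lambda>m. q (m + Suc n))"
    if "length u = Suc n" for u
    using goto_large_tree[OF q, of r u] that unfolding w_def by simp
  have same_length: "length (w u) = length (w t)" for u
    unfolding w_def by (simp add: length_branch_word[OF q])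
  have "prefix (w t) rR"
    using large_tree_subset_imp_prefix_stem[OF qR] R_sub goto_q[OF t] R_eq by simp
  then obtain rest where rR: "rR = w t @ rest" by (auto simp: prefix_def)
  \<comment> \<open>after grafting, every cone at level n + 1 is a translate of R\<close>
  let ?q' = "graft q n rest qR"
  have translate: "goto (large_tree r ?q') u = shiftT (dot (w u) (w t)) R"
    if u: "length u = Suc n" for u
    using goto_large_tree_graft[OF q qR u, of r rest] shiftT_large_tree[OF same_length[of u]]
      R_eq rR unfolding w_def by simp
  show ?thesis
  proof
    show "splitting_strings ?q'" by (rule splitting_strings_graft[OF q qR])
    show "\<forall>m<n. ?q' m = q m" by (simp add: graft_def)
    show "goto (large_tree r ?q') t = R"
      using goto_large_tree_graft[OF q qR t, of r rest] R_eq rR unfolding w_def by simp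
    fix u :: str assume u: "length u = Suc n"
    have "goto (large_tree r ?q') u
        \<subseteq> shiftT (dot (w u) (w t)) (large_tree (w t) (\<lambda>m. q (m + Suc n)))"
      using translate[OF u] shiftT_mono[OF R_sub] goto_q[OF t] by simp
    also have "\<dots> = goto (large_tree r q) u"
      using shiftT_large_tree[OF same_length[of u], of "[]", simplified] goto_q[OF u] by simp
    finally show "goto (large_tree r ?q') u \<in> P \<and> goto (large_tree r ?q') u \<subseteq> goto (large_tree r q) u"
      using translate[OF u] LTF_shiftT[OF P R] by simp
  qed
qed

lemma large_tree_subset_if_cones_subset:
  assumes q: "splitting_strings q"
    and cones: "\<And>u. length u = k \<Longrightarrow> goto (large_tree r q) u \<subseteq> goto T u"
  shows "large_tree r q \<subseteq> T"
proof -
  have "large_tree r q = (\<Union>u\<in>{u. length u = k}. goto (large_tree r q) u)"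
    by (rule large_tree_eq_Union_goto[OF q])
  also have "\<dots> \<subseteq> (\<Union>u\<in>{u. length u = k}. goto T u)" using cones by blast
  also have "\<dots> \<subseteq> T" using goto_subset by blast
  finally show ?thesis .
qed

lemma refine_finitely_many_cones:
  assumes P: "LTF P" and E: "predense E P" and q: "splitting_strings q"
    and cones: "\<forall>u. length u = Suc n \<longrightarrow> goto (large_tree r q) u \<in> P"
    and A: "finite A" "A \<subseteq> {s. length s = Suc n}"
  shows "\<exists>q'. splitting_strings q' \<and> (\<forall>m<n. q' m = q m)
    \<and> (\<forall>u. length u = Suc n \<longrightarrow>
          goto (large_tree r q') u \<in> P \<and> goto (large_tree r q') u \<subseteq> goto (large_tree r q) u)
    \<and> (\<forall>s\<in>A. \<exists>S\<in>E. goto (large_tree r q') s \<subseteq> S)"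
  using A
proof (induction A rule: finite_induct)
  case empty
  show ?case using q cones by blast
next
  case (insert t A)
  have "A \<subseteq> {s. length s = Suc n}" using insert.prems by simp
  with insert.IH obtain q1 where q1: "splitting_strings q1" "\<forall>m<n. q1 m = q m"
    "\<And>u. length u = Suc n \<Longrightarrow>
       goto (large_tree r q1) u \<in> P \<and> goto (large_tree r q1) u \<subseteq> goto (large_tree r q) u"
    "\<And>s. s \<in> A \<Longrightarrow> \<exists>S\<in>E. goto (large_tree r q1) s \<subseteq> S"
    by blast
  have t: "length t = Suc n" using insert.prems by simp
  have "goto (large_tree r q1) t \<in> P" using q1(3)[OF t] by blast
  then obtain S R where S: "S \<in> E" and R: "R \<in> P" "R \<subseteq> goto (large_tree r q1) t" "R \<subseteq> S"
    using E unfolding predense_def by blast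
  obtain q2 where q2: "splitting_strings q2" "\<forall>m<n. q2 m = q1 m"
    "\<And>u. length u = Suc n \<Longrightarrow>
       goto (large_tree r q2) u \<in> P \<and> goto (large_tree r q2) u \<subseteq> goto (large_tree r q1) u"
    "goto (large_tree r q2) t = R"
    using graft_into_cone[OF q1(1) t P R(1,2)] by blast
  have cover: "\<exists>S\<in>E. goto (large_tree r q2) s \<subseteq> S" if s: "s \<in> insert t A" for s
  proof (cases "s = t")
    case True thus ?thesis using q2(4) S R(3) by blast
  next
    case False
    with s have "s \<in> A" by simp
    then obtain S' where "S' \<in> E" "goto (large_tree r q1) s \<subseteq> S'" using q1(4) by blast
    moreover have "length s = Suc n" using \<open>s \<in> A\<close> insert.prems by blast
    hence "goto (large_tree r q2) s \<subseteq> goto (large_tree r q1) s" using q2(3) by blast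
    ultimately show ?thesis by blast
  qed
  have "goto (large_tree r q2) u \<in> P \<and> goto (large_tree r q2) u \<subseteq> goto (large_tree r q) u"
    if "length u = Suc n" for u
    using q1(3)[OF that] q2(3)[OF that] by blast
  moreover have "\<forall>m<n. q2 m = q m" using q1(2) q2(2) by simp
  ultimately show ?case using q2(1) cover by blast
qed

lemma refine_cones:
  assumes P: "LTF P" and E: "predense E P" and q: "splitting_strings q"
    and cones: "\<forall>u. length u = Suc n \<longrightarrow> goto (large_tree r q) u \<in> P"
  obtains q' where "splitting_strings q'" and "\<forall>m<n. q' m = q m"
    and "large_tree r q' \<subseteq> large_tree r q"
    and "\<forall>u. length u = Suc n \<longrightarrow>
           goto (large_tree r q') u \<in> P \<and> (\<exists>S\<in>E. goto (large_tree r q') u \<subseteq> S)"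
proof -
  have fin: "finite {s :: str. length s = Suc n}"
    using finite_lists_length_eq[of "UNIV :: bool set" "Suc n"] by simp
  obtain q' where q': "splitting_strings q'" "\<forall>m<n. q' m = q m"
    "\<And>u. length u = Suc n \<Longrightarrow>
       goto (large_tree r q') u \<in> P \<and> goto (large_tree r q') u \<subseteq> goto (large_tree r q) u"
    "\<And>s. length s = Suc n \<Longrightarrow> \<exists>S\<in>E. goto (large_tree r q') s \<subseteq> S"
    using refine_finitely_many_cones[OF P E q cones fin order_refl] by blast
  have "large_tree r q' \<subseteq> large_tree r q"
    by (rule large_tree_subset_if_cones_subset[OF q'(1)]) (use q'(3) in blast)
  moreover have "\<forall>u. length u = Suc n \<longrightarrow>
      goto (large_tree r q') u \<in> P \<and> (\<exists>S\<in>E. goto (large_tree r q') u \<subseteq> S)"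
    using q'(3,4) by blast
  ultimately show ?thesis using that q'(1,2) by blast
qed

lemma LC_Suc:
  assumes P: "LTF P" and T: "T \<in> LC n P"
  shows "T \<in> LC (Suc n) P"
proof -
  obtain r q where q: "splitting_strings q" and T_eq: "T = large_tree r q"
    using T unfolding LC_def LT_iff_large_tree by blast
  have "goto T (u @ [i]) \<in> P" if u: "length u = n" for u i
  proof -
    have cone: "goto T u \<in> P" using T u unfolding LC_def by blast
    let ?w = "r @ branch_word q (nth u) (length u)"
    have qs: "splitting_strings (\<lambda>m. q (m + length u))" by (rule splitting_strings_shift[OF q])
    have goto_eq: "goto T u = large_tree ?w (\<lambda>m. q (m + length u))"
      unfolding T_eq by (rule goto_large_tree[OF q])
    have "prefix (?w @ [i]) (?w @ q (0 + length u) i)"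
      by (subst splitting_strings_Cons[OF q, of "0 + length u" i]) simp
    hence "?w @ [i] \<in> goto T u" unfolding goto_eq by (rule prefix_child_in_large_tree)
    moreover have "goto T (u @ [i]) = restr (goto T u) (?w @ [i])"
      by (simp add: goto_append goto1_def goto_eq stem_large_tree[OF qs])
    ultimately show ?thesis using LTF_restr[OF P cone] by simp
  qed
  hence "\<forall>s. length s = Suc n \<longrightarrow> goto T s \<in> P" by (auto simp: length_Suc_conv_rev)
  thus ?thesis using T unfolding LC_def by blast
qed

lemma LC_refine_cover:
  assumes P: "LTF P" and E: "predense E P" and T: "T \<in> LC n P"
  obtains T' where "T' \<in> LC (Suc n) P" and "subn T' T (Suc n)"
    and "\<forall>s. length s = Suc n \<longrightarrow> (\<exists>S\<in>E. goto T' s \<subseteq> S)"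
proof -
  obtain r q where q: "splitting_strings q" and T_eq: "T = large_tree r q"
    using T unfolding LC_def LT_iff_large_tree by blast
  have "\<forall>u. length u = Suc n \<longrightarrow> goto (large_tree r q) u \<in> P"
    using LC_Suc[OF P T] T_eq unfolding LC_def by simp
  then obtain q' where q': "splitting_strings q'" "\<forall>m<n. q' m = q m"
    "large_tree r q' \<subseteq> large_tree r q"
    "\<forall>u. length u = Suc n \<longrightarrow> goto (large_tree r q') u \<in> P \<and> (\<exists>S\<in>E. goto (large_tree r q') u \<subseteq> S)"
    using refine_cones[OF P E q] by blast
  have "large_tree r q' \<in> LC (Suc n) P"
    using q' unfolding LC_def LT_iff_large_tree by blast
  moreover have "subn (large_tree r q') T (Suc n)"
    unfolding subn_def
  proof (intro conjI allI impI)
    show "LT (large_tree r q')" "LT T" using q q'(1) T_eq unfolding LT_iff_large_tree by blast+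
    show "large_tree r q' \<subseteq> T" using q'(3) T_eq by simp
    fix k assume "k < Suc n"
    hence "(\<Sum>m<k. length (q' m False)) = (\<Sum>m<k. length (q m False))"
      using q'(2) by (intro sum.cong) auto
    thus "spl (large_tree r q') k = spl T k" using q q'(1) T_eq by (simp add: spl_large_tree)
  qed
  ultimately show ?thesis using that q'(4) by blast
qed

lemma predense_shiftT:
  assumes P: "LTF P" and D: "predense D P"
  shows "predense (shiftT \<sigma> ` D) P"
  unfolding predense_def
proof
  fix T assume "T \<in> P"
  then obtain S R where S: "S \<in> D" and R: "R \<in> P" "R \<subseteq> shiftT \<sigma> T" "R \<subseteq> S"
    using D LTF_shiftT[OF P \<open>T \<in> P\<close>] unfolding predense_def by blast
  have "shiftT \<sigma> R \<in> P" "shiftT \<sigma> R \<subseteq> T" "shiftT \<sigma> R \<subseteq> shiftT \<sigma> S"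
    using LTF_shiftT[OF P R(1)] shiftT_mono[OF R(2), of \<sigma>] shiftT_mono[OF R(3)] by simp_all
  thus "\<exists>S\<in>shiftT \<sigma> ` D. \<exists>R\<in>P. R \<subseteq> T \<and> R \<subseteq> S" using S by blast
qed

lemma MT_snoc:
  assumes \<psi>: "\<psi> \<in> MT P" and T': "T' \<in> LC (length (\<psi> k)) P"
    and sub: "\<psi> k \<noteq> [] \<Longrightarrow> subn T' (last (\<psi> k)) (length (\<psi> k))"
  shows "\<psi>(k := \<psi> k @ [T']) \<in> MT P"
proof -
  let ?\<phi> = "\<psi>(k := \<psi> k @ [T'])"
  have LC: "\<And>k n. n < length (\<psi> k) \<Longrightarrow> \<psi> k ! n \<in> LC n P"
    and fin: "finite (supp \<psi>)"
    and subs: "\<And>k n. 1 \<le> n \<Longrightarrow> n < length (\<psi> k) \<Longrightarrow> subn (\<psi> k ! n) (\<psi> k ! (n - 1)) n"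
    using \<psi> unfolding MT_def is_multitree_def by auto
  have LC': "?\<phi> k' ! n \<in> LC n P" if "n < length (?\<phi> k')" for k' n
    using that LC T' by (cases "k' = k"; cases "n < length (\<psi> k)") (auto simp: nth_append less_Suc_eq)
  have subs': "subn (?\<phi> k' ! n) (?\<phi> k' ! (n - 1)) n" if "1 \<le> n" "n < length (?\<phi> k')" for k' n
  proof (cases "k' = k \<and> n = length (\<psi> k)")
    case True
    hence "\<psi> k \<noteq> []" using that(1) by auto
    thus ?thesis using True sub by (simp add: nth_append last_conv_nth)
  next
    case False
    thus ?thesis using that subs by (cases "k' = k") (auto simp: nth_append less_Suc_eq)
  qed
  have "supp ?\<phi> \<subseteq> insert k (supp \<psi>)" unfolding supp_def by auto
  hence "finite (supp ?\<phi>)" using fin finite_subset by auto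
  thus ?thesis unfolding MT_def is_multitree_def using LC' subs' LC_def by blast
qed

lemma cover_set_dense:
  assumes P: "LTF P" and E: "predense E P" and P_ne: "P \<noteq> {}"
  shows "dense_MT P (cover_set P E k)"
  unfolding dense_MT_def
proof (intro conjI ballI)
  show "cover_set P E k \<subseteq> MT P" unfolding cover_set_def by blast
  fix \<psi> assume \<psi>: "\<psi> \<in> MT P"
  obtain T' where T': "T' \<in> LC (length (\<psi> k)) P"
    and sub: "\<psi> k \<noteq> [] \<Longrightarrow> subn T' (last (\<psi> k)) (length (\<psi> k))"
    and cov: "\<forall>s. length s = length (\<psi> k) \<longrightarrow> (\<exists>S\<in>E. goto T' s \<subseteq> S)"
  proof (cases "\<psi> k = []")
    case True
    obtain T0 where "T0 \<in> P" using P_ne by blast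
    then obtain S R where "S \<in> E" "R \<in> P" "R \<subseteq> S" using E unfolding predense_def by blast
    moreover have "R \<in> LC 0 P" using \<open>R \<in> P\<close> LTF_LT[OF P] unfolding LC_def by simp
    ultimately show ?thesis using that True by auto
  next
    case False
    then obtain p where p: "length (\<psi> k) = Suc p" by (cases "\<psi> k") auto
    have "last (\<psi> k) \<in> LC p P" using \<psi> False p unfolding MT_def by (simp add: last_conv_nth)
    then obtain T' where "T' \<in> LC (Suc p) P" "subn T' (last (\<psi> k)) (Suc p)"
      "\<forall>s. length s = Suc p \<longrightarrow> (\<exists>S\<in>E. goto T' s \<subseteq> S)"
      using LC_refine_cover[OF P E] by blast
    thus ?thesis using that p by simp
  qed
  let ?\<phi> = "\<psi>(k := \<psi> k @ [T'])"
  have "?\<phi> \<in> MT P" by (rule MT_snoc[OF \<psi> T' sub])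
  moreover have "mt_le \<psi> ?\<phi>" unfolding mt_le_def by simp
  ultimately show "\<exists>\<phi>\<in>cover_set P E k. mt_le \<psi> \<phi>"
    unfolding cover_set_def supp_def using cov by auto
qed

section \<open>Fusion\<close>

lemma large_tree_memE:
  assumes q: "splitting_strings q" and y: "y \<in> large_tree r q"
  obtains f where "prefix y (r @ branch_word q f (length y))"
proof -
  obtain f N where "prefix y (r @ branch_word q f N)" using y unfolding large_tree_def by blast
  hence "prefix y (r @ branch_word q f (max N (length y)))"
    using branch_word_prefix_mono[of N "max N (length y)" q f]
    by (meson max.cobounded1 prefix_order.trans same_prefix_prefix)
  moreover have "prefix (r @ branch_word q f (length y)) (r @ branch_word q f (max N (length y)))"
    by (simp add: branch_word_prefix_mono)
  moreover have "length y \<le> length (r @ branch_word q f (length y))"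
    using length_branch_word_ge[OF q, of "length y" f] by simp
  ultimately show ?thesis using that prefix_length_prefix by blast
qed

lemma Inter_large_tree_limit:
  assumes qq: "\<And>p. splitting_strings (qq p)" and T_eq: "\<And>p. T p = large_tree r (qq p)"
    and agree: "\<And>p m. m < p \<Longrightarrow> qq p m = qL m" and decr: "antimono T"
  shows "(\<Inter>n. T n) = large_tree r qL"
proof (intro equalityI subsetI)
  fix y assume "y \<in> (\<Inter>n. T n)"
  hence "y \<in> T (Suc (length y))" by blast
  hence "y \<in> large_tree r (qq (Suc (length y)))" by (simp only: T_eq)
  then obtain f where "prefix y (r @ branch_word (qq (Suc (length y))) f (length y))"
    using large_tree_memE[OF qq] by blast
  moreover have "branch_word (qq (Suc (length y))) f (length y) = branch_word qL f (length y)"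
    by (rule branch_word_cong) (simp add: agree)
  ultimately show "y \<in> large_tree r qL" unfolding large_tree_def by auto
next
  fix y assume "y \<in> large_tree r qL"
  then obtain f N where y: "prefix y (r @ branch_word qL f N)" unfolding large_tree_def by blast
  show "y \<in> (\<Inter>n. T n)"
  proof
    fix p
    have "branch_word qL f N = branch_word (qq (max p N)) f N"
      by (rule branch_word_cong) (simp add: agree less_max_iff_disj)
    hence "y \<in> large_tree r (qq (max p N))" using y unfolding large_tree_def by auto
    hence "y \<in> T (max p N)" by (simp only: T_eq)
    thus "y \<in> T p" using antimonoD[OF decr, of p "max p N"] by auto
  qed
qed

lemma fusion_large_tree:
  assumes LT: "\<And>n. LT (T n)" and sub: "\<And>n. subn (T (Suc n)) (T n) (Suc n)"
  obtains r qL qq where "(\<Inter>n. T n) = large_tree r qL" and "splitting_strings qL"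
    and "\<And>p. splitting_strings (qq p)" and "\<And>p. T p = large_tree r (qq p)"
    and "\<And>p m. m < p \<Longrightarrow> qq p m = qL m"
proof -
  have "\<forall>n. \<exists>r q. splitting_strings q \<and> T n = large_tree r q"
    using LT unfolding LT_iff_large_tree by blast
  then obtain rr qq where qq: "\<And>n. splitting_strings (qq n)"
    and T_eq: "\<And>n. T n = large_tree (rr n) (qq n)"
    by metis
  have step: "rr (Suc n) = rr n \<and> (\<forall>m<n. qq (Suc n) m = qq n m)" for n
    using subn_large_tree[OF qq[of n] qq[of "Suc n"]] sub[of n] T_eq by simp
  have rr: "rr n = rr 0" for n by (induction n) (simp_all add: step)
  have Tp: "T p = large_tree (rr 0) (qq p)" for p using T_eq[of p] rr[of p] by simp
  \<comment> \<open>level m is frozen from stage m + 1 on\<close>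
  define qL where "qL m = qq (Suc m) m" for m
  have agree: "qq p m = qL m" if "m < p" for p m
    using that unfolding qL_def by (induction p) (auto simp: step less_Suc_eq)
  have qL: "splitting_strings qL"
    using qq unfolding splitting_strings_def qL_def by blast
  have "antimono T" unfolding antimono_iff_le_Suc using sub unfolding subn_def by blast
  from Inter_large_tree_limit[OF qq Tp agree this] show ?thesis
    by (rule that[OF _ qL qq Tp agree])
qed

lemma goto_Inter_fusion_subset:
  assumes LT: "\<And>n. LT (T n)" and sub: "\<And>n. subn (T (Suc n)) (T n) (Suc n)"
    and t: "length t = p"
  shows "goto (\<Inter>n. T n) t \<subseteq> goto (T p) t"
proof -
  obtain r qL qq where Inter_eq: "(\<Inter>n. T n) = large_tree r qL" and qL: "splitting_strings qL"
    and qq: "\<And>p. splitting_strings (qq p)" "\<And>p. T p = large_tree r (qq p)"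
    and agree: "\<And>p m. m < p \<Longrightarrow> qq p m = qL m"
    by (rule fusion_large_tree[OF LT sub]) blast
  have word: "branch_word qL (nth t) p = branch_word (qq p) (nth t) p"
    by (rule branch_word_cong) (simp add: agree)
  have "goto (\<Inter>n. T n) t = restr (\<Inter>n. T n) (r @ branch_word qL (nth t) p)"
    using goto_large_tree_eq_restr[OF qL, of r t] Inter_eq t by simp
  also have "\<dots> \<subseteq> restr (T p) (r @ branch_word qL (nth t) p)" by (rule restr_mono) blast
  also have "\<dots> = goto (T p) t"
    using goto_large_tree_eq_restr[OF qq(1)[of p], of r t] qq(2)[of p] t word by simp
  finally show ?thesis .
qed

lemma fusion_cone_below_level:
  assumes LT: "\<And>n. LT (T n)" and sub: "\<And>n. subn (T (Suc n)) (T n) (Suc n)"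
  obtains t s' where "length t = p"
    and "goto (\<Inter>n. T n) s' \<subseteq> goto (\<Inter>n. T n) s" and "goto (\<Inter>n. T n) s' \<subseteq> goto (T p) t"
proof
  let ?I = "\<Inter>n. T n" and ?s' = "s @ replicate (p - length s) False"
  show "length (take p ?s') = p" by simp
  show "goto ?I ?s' \<subseteq> goto ?I s" by (simp add: goto_append goto_subset)
  have "goto ?I ?s' = goto (goto ?I (take p ?s')) (drop p ?s')"
    by (simp only: goto_append[symmetric] append_take_drop_id)
  also have "\<dots> \<subseteq> goto ?I (take p ?s')" by (rule goto_subset)
  also have "\<dots> \<subseteq> goto (T p) (take p ?s')"
    by (rule goto_Inter_fusion_subset[OF LT sub]) simp
  finally show "goto ?I ?s' \<subseteq> goto (T p) (take p ?s')" .
qed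

lemma shiftT_finite_cover:
  assumes T: "LT T" and cov: "\<forall>s. length s = p \<longrightarrow> (\<exists>S\<in>D. goto T s \<subseteq> shiftT \<sigma> S)"
  obtains D' where "finite D'" and "D' \<subseteq> D" and "shiftT \<sigma> T \<subseteq> \<Union>D'"
proof -
  obtain F where F: "\<And>s. length s = p \<Longrightarrow> F s \<in> D \<and> goto T s \<subseteq> shiftT \<sigma> (F s)"
    using cov by metis
  obtain r q where q: "splitting_strings q" and T_eq: "T = large_tree r q"
    using T unfolding LT_iff_large_tree by blast
  have "finite (F ` {s. length s = p})"
    using finite_lists_length_eq[of "UNIV :: bool set" p] by simp
  moreover have "F ` {s. length s = p} \<subseteq> D" using F by blast
  moreover have "T \<subseteq> (\<Union>s\<in>{s. length s = p}. shiftT \<sigma> (F s))"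
    using large_tree_eq_Union_goto[OF q, of r p] T_eq F by blast
  hence "shiftT \<sigma> T \<subseteq> shiftT \<sigma> (\<Union>s\<in>{s. length s = p}. shiftT \<sigma> (F s))" by (rule shiftT_mono)
  hence cover: "shiftT \<sigma> T \<subseteq> \<Union>(F ` {s. length s = p})" by (simp add: shiftT_Union image_image)
  ultimately show ?thesis using that[OF _ _ cover] by blast
qed

section \<open>Finite covers and pre-density\<close>

lemma predense_Un:
  assumes "predense D Q" and "predense D Q'"
  shows "predense D (Q \<union> Q')"
  unfolding predense_def
proof
  fix T assume "T \<in> Q \<union> Q'"
  then obtain S R where "S \<in> D" "R \<in> Q \<union> Q'" "R \<subseteq> T" "R \<subseteq> S"
    using assms unfolding predense_def by blast
  thus "\<exists>S\<in>D. \<exists>R\<in>Q \<union> Q'. R \<subseteq> T \<and> R \<subseteq> S" by blast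
qed

lemma generic_level_covered:
  assumes P: "LTF P" and P_ne: "P \<noteq> {}"
    and shift_closed: "\<forall>E\<in>MD. \<forall>\<sigma>. shiftT \<sigma> ` E \<in> MD"
    and cover_closed: "\<forall>E\<in>MD. \<forall>k. cover_set P E k \<in> MM"
    and Phi_generic: "\<forall>X\<in>MM. dense_MT P X \<longrightarrow> (\<exists>j. \<Phi> j \<in> X)"
    and TP_Phi: "\<forall>j k n. n < length (\<Phi> j k) \<longrightarrow> \<Phi> j k ! n = TP k n"
    and D_in: "D \<in> MD" and D_pre: "predense D P"
  shows "\<exists>p. \<forall>s. length s = p \<longrightarrow> (\<exists>S\<in>D. goto (TP k p) s \<subseteq> shiftT \<sigma> S)"
proof -
  let ?E = "shiftT \<sigma> ` D"
  have "cover_set P ?E k \<in> MM" using shift_closed cover_closed D_in by blast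
  moreover have "dense_MT P (cover_set P ?E k)"
    by (rule cover_set_dense[OF P predense_shiftT[OF P D_pre] P_ne])
  ultimately obtain j where "\<Phi> j \<in> cover_set P ?E k" using Phi_generic by blast
  hence ne: "\<Phi> j k \<noteq> []"
    and cov: "\<forall>s. length s = length (\<Phi> j k) - 1 \<longrightarrow> (\<exists>S\<in>?E. goto (last (\<Phi> j k)) s \<subseteq> S)"
    unfolding cover_set_def supp_def by auto
  have "last (\<Phi> j k) = TP k (length (\<Phi> j k) - 1)"
    using ne TP_Phi by (simp add: last_conv_nth)
  with cov show ?thesis by auto
qed

lemma UU_subset_finite_Union:
  assumes LT: "\<And>k n. LT (TP k n)"
    and level: "\<And>k \<sigma>. \<exists>p. \<forall>s. length s = p \<longrightarrow> (\<exists>S\<in>D. goto (TP k p) s \<subseteq> shiftT \<sigma> S)"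
    and U_in: "U \<in> UU TP"
  shows "\<exists>D'. finite D' \<and> D' \<subseteq> D \<and> U \<subseteq> \<Union>D'"
proof -
  obtain k s \<sigma> where U: "U = shiftT \<sigma> (goto (\<Inter>n. TP k n) s)"
    using U_in unfolding UU_def Uk_def by blast
  obtain p where p: "\<forall>s. length s = p \<longrightarrow> (\<exists>S\<in>D. goto (TP k p) s \<subseteq> shiftT \<sigma> S)"
    using level by blast
  have "U \<subseteq> shiftT \<sigma> (TP k p)"
    unfolding U using goto_subset by (intro shiftT_mono) blast
  moreover obtain D' where "finite D'" "D' \<subseteq> D" "shiftT \<sigma> (TP k p) \<subseteq> \<Union>D'"
    using shiftT_finite_cover[OF LT p] by blast
  ultimately show ?thesis by blast
qed

lemma predense_UU:
  assumes LT: "\<And>k n. LT (TP k n)" and sub: "\<And>k n. subn (TP k (Suc n)) (TP k n) (Suc n)"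
    and level: "\<And>k \<sigma>. \<exists>p. \<forall>s. length s = p \<longrightarrow> (\<exists>S\<in>D. goto (TP k p) s \<subseteq> shiftT \<sigma> S)"
  shows "predense D (UU TP)"
  unfolding predense_def
proof
  fix T assume "T \<in> UU TP"
  then obtain k s \<sigma> where T: "T = shiftT \<sigma> (goto (\<Inter>n. TP k n) s)"
    unfolding UU_def Uk_def by blast
  obtain p where p: "\<forall>s. length s = p \<longrightarrow> (\<exists>S\<in>D. goto (TP k p) s \<subseteq> shiftT \<sigma> S)"
    using level by blast
  let ?I = "\<Inter>n. TP k n"
  obtain t s' where "length t = p" and below: "goto ?I s' \<subseteq> goto ?I s"
    and cone: "goto ?I s' \<subseteq> goto (TP k p) t"
    by (rule fusion_cone_below_level[where T="TP k" and p=p and s=s, OF LT sub]) (rule that)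
  then obtain S where S: "S \<in> D" "goto ?I s' \<subseteq> shiftT \<sigma> S" using p by blast
  have "shiftT \<sigma> (goto ?I s') \<in> UU TP" unfolding UU_def Uk_def by blast
  moreover have "shiftT \<sigma> (goto ?I s') \<subseteq> T" unfolding T by (rule shiftT_mono[OF below])
  moreover have "shiftT \<sigma> (goto ?I s') \<subseteq> S" using shiftT_mono[OF S(2), of \<sigma>] by simp
  ultimately show "\<exists>S\<in>D. \<exists>R\<in>UU TP. R \<subseteq> T \<and> R \<subseteq> S" using S(1) by blast
qed

theorem lemma7p6:
  fixes P :: "tree set" and MD :: "tree set set" and MM :: "mtree set set"
    and \<Phi> :: "nat \<Rightarrow> mtree" and TP :: "nat \<Rightarrow> nat \<Rightarrow> tree"
    and D :: "tree set" and U :: tree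
  assumes LTF: "LTF P"
    and P_in: "P \<in> MD"
    and shift_closed: "\<forall>E\<in>MD. \<forall>\<sigma>. shiftT \<sigma> ` E \<in> MD"
    and cover_closed: "\<forall>E\<in>MD. \<forall>k. cover_set P E k \<in> MM"
    and Phi_MT: "\<forall>j. \<Phi> j \<in> MT P"
    and Phi_incr: "\<forall>j. mt_le (\<Phi> j) (\<Phi> (Suc j))"
    and Phi_generic: "\<forall>X\<in>MM. dense_MT P X \<longrightarrow> (\<exists>j. \<Phi> j \<in> X)"
    and TP_LC: "\<forall>k n. TP k n \<in> LC n P"
    and TP_sub: "\<forall>k n. subn (TP k (Suc n)) (TP k n) (Suc n)"
    and TP_Phi: "\<forall>j k n. n < length (\<Phi> j k) \<longrightarrow> \<Phi> j k ! n = TP k n"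
    and D_in: "D \<in> MD"
    and D_sub: "D \<subseteq> P"
    and D_pre: "predense D P"
    and U_in: "U \<in> UU TP"
  shows "(\<exists>D'. finite D' \<and> D' \<subseteq> D \<and> U \<subseteq> \<Union>D') \<and> predense D (UU TP \<union> P)"
proof -
  have P_ne: "P \<noteq> {}" using TP_LC unfolding LC_def by fastforce
  have LT: "LT (TP k n)" and sub: "subn (TP k (Suc n)) (TP k n) (Suc n)" for k n
    using TP_LC TP_sub unfolding LC_def by auto
  note level =
    generic_level_covered[OF LTF P_ne shift_closed cover_closed Phi_generic TP_Phi D_in D_pre]
  show ?thesis
    using UU_subset_finite_Union[OF LT level U_in] predense_Un[OF predense_UU[where TP=TP, OF LT sub level] D_pre]
    by blast
qed

end
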